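(* Let $\phi:[0,1]\to[0,1]$ be a nondecreasing continuous function such that $\phi(x)>x$ for all $x\in(0,1)$, and let $V_\phi$ be the operator on $L_2[0,1]$ given by $(V_\phi f)(x)=\int_0^{\phi(x)}f(t)\,dt$. Then $V_\phi$ has no negative real eigenvalues, i.e. $\sigma_p(V_\phi)\cap(-\infty,0)=\emptyset$.
   Context: $\sigma_p(V_\phi)$ denotes the point spectrum of $V_\phi$. *)

theory Defs
  imports "HOL-Analysis.Analysis"
begin

definition L2_01 :: "(real \<Rightarrow> complex) set" where
  "L2_01 = {f. set_borel_measurable lborel {0..1} f \<and>
               set_integrable lborel {0..1} (\<lambda>x. (norm (f x))^2)}"

definition V_op :: "(real \<Rightarrow> real) \<Rightarrow> (real \<Rightarrow> complex) \<Rightarrow> real \<Rightarrow> complex" where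
  "V_op \<phi> f x = (LINT t:{0..\<phi> x}|lborel. f t)"

definition point_spectrum :: "(real \<Rightarrow> real) \<Rightarrow> complex set" where
  "point_spectrum \<phi> = {\<mu>. \<exists>f \<in> L2_01.
      \<not> (AE x in lborel. x \<in> {0..1} \<longrightarrow> f x = 0) \<and>
      (AE x in lborel. x \<in> {0..1} \<longrightarrow> V_op \<phi> f x = \<mu> * f x)}"

end

theory Submission
  imports Defs
begin

text \<open>
  If \<open>V\<^sub>\<phi> f = r f\<close> with \<open>r < 0\<close>, then \<open>f\<close> agrees a.e. with the continuous function
  \<open>F \<circ> \<phi> / r\<close>, where \<open>F\<close> is the indefinite integral of \<open>f\<close>. Hence \<open>F\<close> solves the advanced
  differential equation \<open>F' = -c (F \<circ> \<phi>)\<close>, \<open>c = -1/r > 0\<close>, with \<open>F(0) = 0\<close>, and it suffices to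
  show that such a solution vanishes; taking real and imaginary parts, we may assume it real.
  A real solution \<open>R\<close> cannot have \<open>R(1) > 0\<close>: beyond the last point where \<open>R \<le> 0\<close> it would be
  positive, hence decreasing because \<open>\<phi>(x) > x\<close>; symmetrically \<open>R(1) \<ge> 0\<close>. Once \<open>R(1) = 0\<close>,
  the equation only looks ahead, \<open>R(x) = c \<integral>\<^sub>x\<^sup>1 R(\<phi>(t)) dt\<close>, so the weighted norm
  \<open>W = max |R(y)| exp(2cy)\<close> satisfies \<open>|R(x)| \<le> c W \<integral>\<^sub>x\<^sup>1 exp(-2ct) dt \<le> (W/2) exp(-2cx)\<close>,
  i.e. \<open>W \<le> W/2\<close>, and \<open>R = 0\<close>.
\<close>

lemma advanced_ode_end_nonpos:
  fixes R \<phi> :: "real \<Rightarrow> real" and c :: real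
  assumes c: "c > 0"
    and \<phi>: "\<And>x. 0 < x \<Longrightarrow> x < 1 \<Longrightarrow> x < \<phi> x \<and> \<phi> x \<le> 1"
    and cont: "continuous_on {0..1} R"
    and R0: "R 0 = 0"
    and der: "\<And>x. 0 < x \<Longrightarrow> x < 1 \<Longrightarrow> (R has_real_derivative - c * R (\<phi> x)) (at x)"
  shows "R 1 \<le> 0"
proof (rule ccontr)
  assume R1: "\<not> R 1 \<le> 0"
  define Z where "Z = {x \<in> {0..1}. R x \<le> 0}"
  have "compact Z"
    unfolding compact_eq_bounded_closed
  proof
    show "bounded Z"
      by (rule bounded_subset[OF bounded_closed_interval]) (auto simp: Z_def)
    show "closed Z"
      unfolding Z_def by (intro continuous_on_closed_Collect_le cont continuous_on_const closed_atLeastAtMost)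
  qed
  moreover have "0 \<in> Z"
    using R0 unfolding Z_def by simp
  ultimately obtain x0 where x0: "x0 \<in> Z" and x0_max: "\<And>y. y \<in> Z \<Longrightarrow> y \<le> x0"
    using compact_attains_sup by (metis empty_iff)
  have x0_01: "0 \<le> x0" "x0 < 1"
    using x0 R1 unfolding Z_def by (auto simp: less_le)
  have R_pos: "R y > 0" if "x0 < y" "y \<le> 1" for y
    using x0_max[of y] that x0_01 unfolding Z_def by force
  have "R 1 \<le> R x0"
  proof (rule DERIV_nonpos_imp_decreasing_open[of x0 1 R])
    show "continuous_on {x0..1} R"
      using cont x0_01 by (auto intro: continuous_on_subset)
    fix x assume x: "x0 < x" "x < 1"
    have "R (\<phi> x) > 0"
      using R_pos \<phi>[of x] x x0_01 by auto
    then show "\<exists>y. (R has_real_derivative y) (at x) \<and> y \<le> 0"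
      using der[of x] x x0_01 c by (intro exI[of _ "- c * R (\<phi> x)"]) auto
  qed (use x0_01 in simp)
  with x0 R1 show False
    unfolding Z_def by simp
qed

lemma advanced_ode_weighted_bound:
  fixes R \<phi> :: "real \<Rightarrow> real" and c W x :: real
  assumes c: "c > 0"
    and \<phi>: "\<And>x. 0 < x \<Longrightarrow> x < 1 \<Longrightarrow> x < \<phi> x \<and> \<phi> x \<le> 1"
    and cont: "continuous_on {0..1} R"
    and R1: "R 1 = 0"
    and der: "\<And>x. 0 < x \<Longrightarrow> x < 1 \<Longrightarrow> (R has_real_derivative - c * R (\<phi> x)) (at x)"
    and W: "\<And>y. y \<in> {0..1} \<Longrightarrow> \<bar>R y\<bar> * exp (2 * c * y) \<le> W"
    and x: "x \<in> {0..1}"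
  shows "R x \<le> W / 2 * exp (- 2 * c * x)"
proof -
  have W_nonneg: "W \<ge> 0"
    using W[of 0] by (smt (verit) abs_ge_zero atLeastAtMost_iff exp_gt_zero mult_nonneg_nonneg)
  define D where "D t = W / 2 * (exp (- 2 * c * t) - exp (- 2 * c)) - R t" for t
  have D_deriv_nonpos: "\<exists>y. (D has_real_derivative y) (at t) \<and> y \<le> 0" if t: "x < t" "t < 1" for t
  proof -
    have "(D has_real_derivative - c * W * exp (- 2 * c * t) + c * R (\<phi> t)) (at t)"
      unfolding D_def using t x der[of t]
      by (auto intro!: derivative_eq_intros simp: algebra_simps)
    moreover have "R (\<phi> t) \<le> W * exp (- 2 * c * t)"
    proof -
      have \<phi>t: "t < \<phi> t" "\<phi> t \<le> 1"
        using \<phi>[of t] t x by auto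
      have "R (\<phi> t) * exp (2 * c * \<phi> t) \<le> W"
        using W[of "\<phi> t"] \<phi>t t x
        by (smt (verit) atLeastAtMost_iff abs_ge_self exp_gt_zero mult_right_mono)
      then have "R (\<phi> t) \<le> W * exp (- 2 * c * \<phi> t)"
        by (simp add: exp_minus field_simps)
      also have "\<dots> \<le> W * exp (- 2 * c * t)"
        using \<phi>t c W_nonneg by (intro mult_left_mono) auto
      finally show ?thesis .
    qed
    ultimately show ?thesis
      using c by (intro exI) (auto simp: algebra_simps)
  qed
  have "continuous_on {x..1} D"
    unfolding D_def using x by (intro continuous_intros continuous_on_subset[OF cont]) auto
  then have "D 1 \<le> D x"
    using x D_deriv_nonpos DERIV_nonpos_imp_decreasing_open[of x 1 D] by auto
  then have "R x \<le> W / 2 * (exp (- 2 * c * x) - exp (- 2 * c))"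
    unfolding D_def using R1 by simp
  also have "\<dots> \<le> W / 2 * exp (- 2 * c * x)"
    using W_nonneg by (simp add: mult_left_mono)
  finally show ?thesis .
qed

lemma advanced_ode_vanishes:
  fixes R \<phi> :: "real \<Rightarrow> real" and c x :: real
  assumes c: "c > 0"
    and \<phi>: "\<And>x. 0 < x \<Longrightarrow> x < 1 \<Longrightarrow> x < \<phi> x \<and> \<phi> x \<le> 1"
    and cont: "continuous_on {0..1} R"
    and R0: "R 0 = 0"
    and der: "\<And>x. 0 < x \<Longrightarrow> x < 1 \<Longrightarrow> (R has_real_derivative - c * R (\<phi> x)) (at x)"
    and x: "x \<in> {0..1}"
  shows "R x = 0"
proof -
  have cont_neg: "continuous_on {0..1} (\<lambda>x. - R x)"
    using cont by (intro continuous_intros)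
  have der_neg: "((\<lambda>x. - R x) has_real_derivative - c * - R (\<phi> x)) (at x)" if "0 < x" "x < 1" for x
    using der[OF that] by (auto intro!: derivative_eq_intros)
  have "R 1 \<le> 0" "- R 1 \<le> 0"
    using advanced_ode_end_nonpos[OF c \<phi> cont R0 der]
      advanced_ode_end_nonpos[OF c \<phi> cont_neg _ der_neg] R0 by auto
  then have R1: "R 1 = 0"
    by simp
  have "continuous_on {0..1} (\<lambda>y. \<bar>R y\<bar> * exp (2 * c * y))"
    using cont by (intro continuous_intros)
  moreover have "{0..1::real} \<noteq> {}"
    by simp
  ultimately obtain x1 where x1: "x1 \<in> {0..1}"
    and x1_max: "\<forall>y\<in>{0..1}. \<bar>R y\<bar> * exp (2 * c * y) \<le> \<bar>R x1\<bar> * exp (2 * c * x1)"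
    using continuous_attains_sup[OF compact_Icc] by blast
  define W where "W = \<bar>R x1\<bar> * exp (2 * c * x1)"
  have W: "\<bar>R y\<bar> * exp (2 * c * y) \<le> W" and W_neg: "\<bar>- R y\<bar> * exp (2 * c * y) \<le> W"
    if "y \<in> {0..1}" for y
    using x1_max that by (simp_all add: W_def)
  have "R x1 \<le> W / 2 * exp (- 2 * c * x1)"
    by (rule advanced_ode_weighted_bound[OF c \<phi> cont R1 der W x1])
  moreover have "- R x1 \<le> W / 2 * exp (- 2 * c * x1)"
    by (rule advanced_ode_weighted_bound[OF c \<phi> cont_neg _ der_neg W_neg x1]) (simp_all add: R1)
  ultimately have "\<bar>R x1\<bar> \<le> W / 2 * exp (- 2 * c * x1)"
    by linarith
  then have "W \<le> W / 2 * exp (- 2 * c * x1) * exp (2 * c * x1)"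
    by (subst (1) W_def) (intro mult_right_mono, auto)
  also have "\<dots> = W / 2"
    by (simp flip: exp_add)
  finally have "W \<le> 0"
    by simp
  then have "\<bar>R x\<bar> * exp (2 * c * x) \<le> 0"
    using W[OF x] by linarith
  then show "R x = 0"
    by (simp add: mult_le_0_iff)
qed

lemma advanced_ode_vanishes_complex:
  fixes G :: "real \<Rightarrow> complex" and \<phi> :: "real \<Rightarrow> real" and c x :: real
  assumes c: "c > 0"
    and \<phi>: "\<And>x. 0 < x \<Longrightarrow> x < 1 \<Longrightarrow> x < \<phi> x \<and> \<phi> x \<le> 1"
    and cont: "continuous_on {0..1} G"
    and G0: "G 0 = 0"
    and der: "\<And>x. 0 < x \<Longrightarrow> x < 1 \<Longrightarrow> (G has_vector_derivative - c *\<^sub>R G (\<phi> x)) (at x)"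
    and x: "x \<in> {0..1}"
  shows "G x = 0"
proof -
  have "Re (G x) = 0"
  proof (rule advanced_ode_vanishes[OF c \<phi> _ _ _ x])
    show "continuous_on {0..1} (\<lambda>x. Re (G x))"
      using cont by (intro continuous_intros)
    fix t :: real assume "0 < t" "t < 1"
    from bounded_linear.has_vector_derivative[OF bounded_linear_Re der[OF this]]
    show "((\<lambda>x. Re (G x)) has_real_derivative - c * Re (G (\<phi> t))) (at t)"
      by (simp add: has_real_derivative_iff_has_vector_derivative)
  next
    show "Re (G 0) = 0"
      using G0 by simp
  qed
  moreover have "Im (G x) = 0"
  proof (rule advanced_ode_vanishes[OF c \<phi> _ _ _ x])
    show "continuous_on {0..1} (\<lambda>x. Im (G x))"
      using cont by (intro continuous_intros)
    fix t :: real assume "0 < t" "t < 1"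
    from bounded_linear.has_vector_derivative[OF bounded_linear_Im der[OF this]]
    show "((\<lambda>x. Im (G x)) has_real_derivative - c * Im (G (\<phi> t))) (at t)"
      by (simp add: has_real_derivative_iff_has_vector_derivative)
  next
    show "Im (G 0) = 0"
      using G0 by simp
  qed
  ultimately show ?thesis
    by (simp add: complex_eq_iff)
qed

lemma L2_01_set_integrable:
  assumes "f \<in> L2_01"
  shows "set_integrable lborel {0..1} f"
proof (rule set_integrable_bound)
  show "set_borel_measurable lborel {0..1} f"
    using assms by (simp add: L2_01_def)
  have "set_integrable lborel {0..1::real} (\<lambda>x. 1::real)"
    by (rule borel_integrable_atLeastAtMost') (rule continuous_on_const)
  then show "set_integrable lborel {0..1} (\<lambda>x. 1 + (norm (f x))\<^sup>2)"
    using assms unfolding L2_01_def set_integrable_def scaleR_add_right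
    by (intro Bochner_Integration.integrable_add) auto
  have "t \<le> 1 + t\<^sup>2" for t :: real
    using zero_le_power2[of "t - 1/2"] by (simp add: power2_eq_square algebra_simps)
  then show "AE x in lborel. x \<in> {0..1} \<longrightarrow> norm (f x) \<le> norm (1 + (norm (f x))\<^sup>2)"
    by (intro AE_I2) simp
qed

lemma integral_cong_AE_on:
  fixes f g :: "'a::euclidean_space \<Rightarrow> 'b::euclidean_space"
  assumes f: "set_integrable lborel S f" and g: "set_integrable lborel S g"
    and eq: "AE x in lborel. x \<in> S \<longrightarrow> f x = g x"
    and T: "T \<in> sets lborel" "T \<subseteq> S"
  shows "integral T f = integral T g"
proof -
  have fT: "set_integrable lborel T f" and gT: "set_integrable lborel T g"
    using set_integrable_subset[OF f T] set_integrable_subset[OF g T] .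
  have "(LINT x:T|lborel. f x) = (LINT x:T|lborel. g x)"
    unfolding set_lebesgue_integral_def
  proof (rule integral_cong_AE)
    show "(\<lambda>x. indicator T x *\<^sub>R f x) \<in> borel_measurable lborel"
      "(\<lambda>x. indicator T x *\<^sub>R g x) \<in> borel_measurable lborel"
      using fT gT unfolding set_integrable_def by auto
    show "AE x in lborel. indicator T x *\<^sub>R f x = indicator T x *\<^sub>R g x"
      using eq by eventually_elim (use T in \<open>auto split: split_indicator\<close>)
  qed
  then show ?thesis
    by (simp add: set_borel_integral_eq_integral(2)[OF fT] set_borel_integral_eq_integral(2)[OF gT])
qed

lemma negative_eigenfunction_eq_0:
  fixes \<phi> :: "real \<Rightarrow> real" and f :: "real \<Rightarrow> complex" and r :: real
  assumes \<phi>_01: "\<And>x. x \<in> {0..1} \<Longrightarrow> \<phi> x \<in> {0..1}"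
    and \<phi>_cont: "continuous_on {0..1} \<phi>"
    and \<phi>_adv: "\<And>x. 0 < x \<Longrightarrow> x < 1 \<Longrightarrow> x < \<phi> x"
    and f: "f \<in> L2_01" and r: "r < 0"
    and eigen: "AE x in lborel. x \<in> {0..1} \<longrightarrow> V_op \<phi> f x = of_real r * f x"
  shows "AE x in lborel. x \<in> {0..1} \<longrightarrow> f x = 0"
proof -
  have f_int: "set_integrable lborel {0..1} f"
    using f by (rule L2_01_set_integrable)
  define F where "F y = integral {0..y} f" for y
  have V_F: "V_op \<phi> f x = F (\<phi> x)" if "x \<in> {0..1}" for x
    using set_borel_integral_eq_integral(2)[OF set_integrable_subset[OF f_int]] \<phi>_01[OF that]
    unfolding V_op_def F_def by auto
  have "continuous_on {0..1} F"
    unfolding F_def using set_borel_integral_eq_integral(1)[OF f_int]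
    by (rule indefinite_integral_continuous_1)
  then have "continuous_on {0..1} (\<lambda>x. F (\<phi> x))"
    using \<phi>_01 by (intro continuous_on_compose2[OF _ \<phi>_cont]) auto
  define g where "g x = F (\<phi> x) / of_real r" for x
  have g_cont: "continuous_on {0..1} g"
    unfolding g_def using \<open>continuous_on {0..1} (\<lambda>x. F (\<phi> x))\<close> r
    by (intro continuous_intros) auto
  have f_eq_g: "AE x in lborel. x \<in> {0..1} \<longrightarrow> f x = g x"
    using eigen by eventually_elim (use r in \<open>auto simp: V_F g_def field_simps\<close>)
  define G where "G y = integral {0..y} g" for y
  have F_eq_G: "F y = G y" if "y \<in> {0..1}" for y
    unfolding F_def G_def
    using f_int borel_integrable_atLeastAtMost'[OF g_cont] f_eq_g that
    by (intro integral_cong_AE_on) auto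
  define c where "c = - 1 / r"
  have "G y = 0" if "y \<in> {0..1}" for y
  proof (rule advanced_ode_vanishes_complex[OF _ _ _ _ _ that])
    show "c > 0"
      using r by (simp add: c_def)
    show "continuous_on {0..1} G"
      unfolding G_def using integrable_continuous_real[OF g_cont]
      by (rule indefinite_integral_continuous_1)
    show "G 0 = 0"
      by (simp add: G_def)
    fix x :: real assume x: "0 < x" "x < 1"
    show "x < \<phi> x \<and> \<phi> x \<le> 1"
      using \<phi>_adv[OF x] \<phi>_01[of x] x by auto
    have "g x = - c *\<^sub>R G (\<phi> x)"
      using F_eq_G[OF \<phi>_01[of x]] x r
      by (simp add: g_def c_def scaleR_conv_of_real field_simps)
    then show "(G has_vector_derivative - c *\<^sub>R G (\<phi> x)) (at x)"
      using integral_has_vector_derivative[OF g_cont, of x] x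
      by (simp add: G_def[abs_def] at_within_Icc_at)
  qed
  then have "g x = 0" if "x \<in> {0..1}" for x
    using F_eq_G \<phi>_01[OF that] by (simp add: g_def)
  then show ?thesis
    using f_eq_g by auto
qed

theorem proposition4p1:
  fixes \<phi> :: "real \<Rightarrow> real"
  assumes "\<forall>x\<in>{0..1}. \<phi> x \<in> {0..1}"
    and "mono_on {0..1} \<phi>"
    and "continuous_on {0..1} \<phi>"
    and "\<forall>x\<in>{0<..<1}. \<phi> x > x"
  shows "point_spectrum \<phi> \<inter> {complex_of_real r | r. r < 0} = {}"
proof -
  have "AE x in lborel. x \<in> {0..1} \<longrightarrow> f x = 0"
    if "r < 0" "f \<in> L2_01" "AE x in lborel. x \<in> {0..1} \<longrightarrow> V_op \<phi> f x = of_real r * f x"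
    for r f
    using negative_eigenfunction_eq_0[OF _ assms(3) _ that(2,1,3)] assms(1,4) by auto
  then show ?thesis
    unfolding point_spectrum_def by blast
qed

end
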